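(* Suppose $X$ has well-defined scattered $\Pi_1$-products. If $A$ is a homotopy cut-set for paths $\alpha,\beta:[0,1]\to X$, then there is a homotopy cut-set $B\subseteq A$ for $\alpha$ and $\beta$ such that $\alpha(B\cap(0,1))=\beta(B\cap(0,1))\subseteq\mathbf{aw}(X)$.
   Context: $\simeq$ is path-homotopy. A loop is trivial if path-homotopic to a constant loop. A sequence of loops $\alpha_n$ based at $x$ is a null-sequence if every neighborhood of $x$ contains $\alpha_n([0,1])$ for all but finitely many $n$. $\mathbf{aw}(X)=\{x\in X\mid \text{there is a null-sequence of non-trivial loops based at }x\}$. For paths $\alpha,\beta:[s,t]\to X$, a set $A\subseteq[s,t]$ is a homotopy cut-set for $\alpha,\beta$ if $A$ is closed, nowhere dense, contains $\{s,t\}$, $\alpha|_A=\beta|_A$, and $\alpha|_{[a,b]}\simeq\beta|_{[a,b]}$ for every component $(a,b)$ of $[s,t]\setminus A$. $X$ has well-defined scattered $\Pi_1$-products if any two paths $[0,1]\to X$ that admit a scattered homotopy cut-set are path-homotopic. *)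

theory Defs
  imports "HOL-Analysis.Analysis"
begin

text \<open>The space X is the type 'a (with its topology); homotopies take place in UNIV.\<close>

definition restr_path :: "real \<Rightarrow> real \<Rightarrow> (real \<Rightarrow> 'a) \<Rightarrow> real \<Rightarrow> 'a" where
  "restr_path a b g = (\<lambda>x. g ((b - a) * x + a))"

definition is_loop_at :: "(real \<Rightarrow> 'a::topological_space) \<Rightarrow> 'a \<Rightarrow> bool" where
  "is_loop_at g x \<longleftrightarrow> path g \<and> pathstart g = x \<and> pathfinish g = x"

definition trivial_loop :: "(real \<Rightarrow> 'a::topological_space) \<Rightarrow> bool" where
  "trivial_loop g \<longleftrightarrow> (\<exists>c. homotopic_paths UNIV g (\<lambda>t. c))"

definition null_sequence :: "(nat \<Rightarrow> real \<Rightarrow> 'a::topological_space) \<Rightarrow> 'a \<Rightarrow> bool" where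
  "null_sequence gs x \<longleftrightarrow> (\<forall>n. is_loop_at (gs n) x) \<and>
     (\<forall>U. open U \<and> x \<in> U \<longrightarrow> (\<forall>\<^sub>F n in sequentially. path_image (gs n) \<subseteq> U))"

definition aw :: "'a::topological_space set" where
  "aw = {x. \<exists>gs. null_sequence gs x \<and> (\<forall>n. \<not> trivial_loop (gs n))}"

definition homotopy_cut_set ::
  "real \<Rightarrow> real \<Rightarrow> (real \<Rightarrow> 'a::topological_space) \<Rightarrow> (real \<Rightarrow> 'a) \<Rightarrow> real set \<Rightarrow> bool" where
  "homotopy_cut_set s t \<alpha> \<beta> A \<longleftrightarrow>
     A \<subseteq> {s..t} \<and> closed A \<and> interior (closure A) = {} \<and> s \<in> A \<and> t \<in> A \<and>
     (\<forall>x\<in>A. \<alpha> x = \<beta> x) \<and>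
     (\<forall>a b. a < b \<and> {a<..<b} \<in> components ({s..t} - A) \<longrightarrow>
        homotopic_paths UNIV (restr_path a b \<alpha>) (restr_path a b \<beta>))"

definition scattered :: "'b::topological_space set \<Rightarrow> bool" where
  "scattered A \<longleftrightarrow> (\<forall>T\<subseteq>A. T \<noteq> {} \<longrightarrow> (\<exists>x\<in>T. \<exists>U. open U \<and> U \<inter> T = {x}))"

definition well_defined_scattered_products :: "'a::topological_space itself \<Rightarrow> bool" where
  "well_defined_scattered_products _ \<longleftrightarrow>
     (\<forall>\<alpha> \<beta> :: real \<Rightarrow> 'a. path \<alpha> \<and> path \<beta> \<and>
        (\<exists>A. scattered A \<and> homotopy_cut_set 0 1 \<alpha> \<beta> A) \<longrightarrow> homotopic_paths UNIV \<alpha> \<beta>)"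

end

theory Submission
  imports Defs
begin

(* Call a point x of A regular (locally_restr_homotopic) if alpha|[x,c] and beta|[x,c] are
   homotopic for all c in A close to x, and let B consist of 0, 1 and the non-regular points of A;
   B is closed. At a non-regular point x there are c_n in A tending to x with alpha|[x,c_n] not
   homotopic to beta|[x,c_n], so the loops alpha|[x,c_n] . beta|[c_n,x] form a null-sequence of
   non-trivial loops at alpha x. On a gap (a,b) of B, any two points of A in (a,b) are linked by a
   compactness argument through regular points and gaps of A. Near the end a, either A has a gap,
   or A accumulates at a along s_n; then {a, m} together with the s_n is a scattered homotopy
   cut-set for alpha|[a,m] and beta|[a,m], and well-defined scattered products make these
   homotopic. *)

definition restr_homotopic :: "(real \<Rightarrow> 'a::topological_space) \<Rightarrow> (real \<Rightarrow> 'a) \<Rightarrow> real \<Rightarrow> real \<Rightarrow> bool"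
  where "restr_homotopic \<alpha> \<beta> u v \<longleftrightarrow> homotopic_paths UNIV (restr_path u v \<alpha>) (restr_path u v \<beta>)"

lemma restr_path_eq_compose_subpath: "restr_path u v g = g \<circ> subpath u v (\<lambda>t::real. t)"
  by (simp add: restr_path_def subpath_def o_def)

lemma pathstart_restr_path [simp]: "pathstart (restr_path u v g) = g u"
  and pathfinish_restr_path [simp]: "pathfinish (restr_path u v g) = g v"
  by (simp_all add: restr_path_def pathstart_def pathfinish_def)

lemma reversepath_restr_path: "reversepath (restr_path u v g) = restr_path v u g"
  by (auto simp: reversepath_def restr_path_def algebra_simps)

lemma restr_path_restr_path:
  "restr_path u v (restr_path p q g) = restr_path (p + (q - p) * u) (p + (q - p) * v) g"
  by (simp add: restr_path_def algebra_simps)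

lemma path_image_restr_path: "path_image (restr_path u v g) = g ` closed_segment u v"
  by (simp add: restr_path_eq_compose_subpath path_image_compose path_image_subpath_gen)

lemma path_restr_path:
  assumes "path g" "u \<in> {0..1}" "v \<in> {0..1}"
  shows "path (restr_path u v g)"
proof -
  have "path (subpath u v (\<lambda>t::real. t))"
    using assms by (intro path_subpath) (auto simp: path_def continuous_on_id)
  moreover have "path_image (subpath u v (\<lambda>t::real. t)) \<subseteq> {0..1}"
    using assms(2,3) by (simp add: path_image_subpath_gen closed_segment_subset)
  ultimately show ?thesis
    using assms(1) path_continuous_image continuous_on_subset
    unfolding restr_path_eq_compose_subpath path_def by blast
qed

lemma homotopic_paths_join_restr_path:
  assumes "path g" "u \<in> {0..1}" "v \<in> {0..1}" "w \<in> {0..1}"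
  shows "homotopic_paths UNIV (restr_path u v g +++ restr_path v w g) (restr_path u w g)"
proof -
  have "homotopic_paths {0..1} (subpath u v (\<lambda>t::real. t) +++ subpath v w (\<lambda>t. t)) (subpath u w (\<lambda>t. t))"
    using assms by (intro homotopic_join_subpaths) (auto simp: path_def path_image_def continuous_on_id)
  then have "homotopic_paths UNIV (g \<circ> (subpath u v (\<lambda>t::real. t) +++ subpath v w (\<lambda>t. t)))
               (g \<circ> subpath u w (\<lambda>t. t))"
    using assms(1) homotopic_paths_continuous_image[of "{0..1}" _ _ g UNIV] by (auto simp: path_def)
  then show ?thesis
    by (simp add: restr_path_eq_compose_subpath path_compose_join)
qed

lemma restr_homotopic_refl: "path \<alpha> \<Longrightarrow> u \<in> {0..1} \<Longrightarrow> \<alpha> u = \<beta> u \<Longrightarrow> restr_homotopic \<alpha> \<beta> u u"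
  using path_restr_path[of \<alpha> u u]
  by (simp add: restr_homotopic_def restr_path_def)

lemma restr_homotopic_sym: "restr_homotopic \<alpha> \<beta> u v \<Longrightarrow> restr_homotopic \<alpha> \<beta> v u"
  unfolding restr_homotopic_def
  using homotopic_paths_reversepath_D[of UNIV "restr_path u v \<alpha>" "restr_path u v \<beta>"] by (simp add: reversepath_restr_path)

lemma restr_homotopic_trans:
  assumes "path \<alpha>" "path \<beta>" "u \<in> {0..1}" "v \<in> {0..1}" "w \<in> {0..1}"
    and "restr_homotopic \<alpha> \<beta> u v" "restr_homotopic \<alpha> \<beta> v w"
  shows "restr_homotopic \<alpha> \<beta> u w"
proof -
  have "homotopic_paths UNIV (restr_path u w \<alpha>) (restr_path u v \<alpha> +++ restr_path v w \<alpha>)"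
    using homotopic_paths_join_restr_path assms homotopic_paths_sym by blast
  also have "homotopic_paths UNIV \<dots> (restr_path u v \<beta> +++ restr_path v w \<beta>)"
    using assms(6,7) unfolding restr_homotopic_def by (intro homotopic_paths_join) auto
  also have "homotopic_paths UNIV \<dots> (restr_path u w \<beta>)"
    using homotopic_paths_join_restr_path assms by blast
  finally show ?thesis unfolding restr_homotopic_def .
qed

lemma greaterThanLessThan_in_components_iff:
  fixes S :: "real set"
  assumes "u < v"
  shows "{u<..<v} \<in> components ({s..t} - S) \<longleftrightarrow>
           s \<le> u \<and> v \<le> t \<and> u \<in> S \<and> v \<in> S \<and> {u<..<v} \<inter> S = {}"
proof
  assume C: "{u<..<v} \<in> components ({s..t} - S)"
  then have sub: "{u<..<v} \<subseteq> {s..t} - S"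
    by (rule in_components_subset)
  then have "{u..v} \<subseteq> {s..t}"
    using closure_mono[of "{u<..<v}" "{s..t}"] assms by auto
  then have bounds: "s \<le> u" "v \<le> t"
    using assms by auto
  have "w \<in> S" if "w \<in> {u, v}" for w
  proof (rule ccontr)
    assume "w \<notin> S"
    have "insert w {u<..<v} \<subseteq> {u<..<v}"
    proof (rule components_maximal[OF C])
      have "insert w {u<..<v} = (if w = u then {u..<v} else {u<..v})"
        using that assms by auto
      then show "connected (insert w {u<..<v})"
        by simp
      show "insert w {u<..<v} \<subseteq> {s..t} - S"
        using sub that bounds assms \<open>w \<notin> S\<close> by auto
      show "{u<..<v} \<inter> insert w {u<..<v} \<noteq> {}"
        using assms by auto
    qed
    then show False
      using that by auto
  qed
  then show "s \<le> u \<and> v \<le> t \<and> u \<in> S \<and> v \<in> S \<and> {u<..<v} \<inter> S = {}"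
    using sub bounds by auto
next
  assume "s \<le> u \<and> v \<le> t \<and> u \<in> S \<and> v \<in> S \<and> {u<..<v} \<inter> S = {}"
  then have ends: "s \<le> u" "v \<le> t" "u \<in> S" "v \<in> S" and disj: "{u<..<v} \<inter> S = {}"
    by auto
  show "{u<..<v} \<in> components ({s..t} - S)"
    unfolding in_components_maximal
  proof (intro conjI allI impI)
    show "{u<..<v} \<noteq> {}" "connected {u<..<v}"
      using assms by auto
    show "{u<..<v} \<subseteq> {s..t} - S"
      using ends disj by auto
    fix D
    assume D: "D \<noteq> {} \<and> {u<..<v} \<subseteq> D \<and> D \<subseteq> {s..t} - S \<and> connected D"
    have "(u + v) / 2 \<in> {u<..<v}"
      using assms by simp
    then have mid: "(u + v) / 2 \<in> D"
      using D by blast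
    have "D \<subseteq> {u<..<v}"
    proof
      fix y
      assume "y \<in> D"
      then have "{min y ((u + v) / 2)..max y ((u + v) / 2)} \<subseteq> D"
        using D mid connected_contains_Icc[of D] by (cases "y \<le> (u + v) / 2") auto
      moreover have "u \<notin> D" "v \<notin> D"
        using D ends by auto
      ultimately have "u \<notin> {min y ((u + v) / 2)..max y ((u + v) / 2)}"
        "v \<notin> {min y ((u + v) / 2)..max y ((u + v) / 2)}"
        by blast+
      then show "y \<in> {u<..<v}"
        using assms by (auto simp: min_def max_def split: if_splits)
    qed
    then show "D = {u<..<v}"
      using D by blast
  qed
qed

lemma restr_homotopic_across_gap:
  assumes cut: "homotopy_cut_set 0 1 \<alpha> \<beta> A"
    and "u \<in> A" "v \<in> A" "u \<noteq> v" "open_segment u v \<inter> A = {}"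
  shows "restr_homotopic \<alpha> \<beta> u v"
proof -
  have gap: "restr_homotopic \<alpha> \<beta> p q"
    if "p < q" "p \<in> A" "q \<in> A" "{p<..<q} \<inter> A = {}" for p q
  proof -
    have "A \<subseteq> {0..1}"
      using cut by (simp add: homotopy_cut_set_def)
    then have "{p<..<q} \<in> components ({0..1} - A)"
      using that by (subst greaterThanLessThan_in_components_iff) auto
    then show ?thesis
      using cut \<open>p < q\<close> by (simp add: homotopy_cut_set_def restr_homotopic_def)
  qed
  show ?thesis
  proof (cases "u < v")
    case True
    then show ?thesis
      using gap assms by (simp add: open_segment_eq_real_ivl)
  next
    case False
    then show ?thesis
      using gap[of v u] assms restr_homotopic_sym by (simp add: open_segment_eq_real_ivl)
  qed
qed

lemma scattered_insert:
  fixes S :: "'a::t1_space set"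
  assumes "scattered S"
  shows "scattered (insert a S)"
  unfolding scattered_def
proof (intro allI impI)
  fix T
  assume T: "T \<subseteq> insert a S" "T \<noteq> {}"
  show "\<exists>x\<in>T. \<exists>U. open U \<and> U \<inter> T = {x}"
  proof (cases "T - {a} = {}")
    case True
    then show ?thesis
      using T by (intro bexI[of _ a] exI[of _ UNIV]) auto
  next
    case False
    then obtain x U where "x \<in> T - {a}" "open U" "U \<inter> (T - {a}) = {x}"
      using assms T unfolding scattered_def by (metis Diff_subset_conv insert_is_Un)
    then show ?thesis
      by (intro bexI[of _ x] exI[of _ "U - {a}"]) (auto simp: open_Diff)
  qed
qed

lemma scattered_insert_limit_range:
  fixes s :: "nat \<Rightarrow> real"
  assumes lim: "s \<longlonglongrightarrow> 0" and pos: "\<And>n. 0 < s n"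
  shows "scattered (insert 0 (range s))"
  unfolding scattered_def
proof (intro allI impI)
  fix T
  assume T: "T \<subseteq> insert 0 (range s)" "T \<noteq> {}"
  show "\<exists>x\<in>T. \<exists>U. open U \<and> U \<inter> T = {x}"
  proof (cases "T = {0}")
    case True
    then show ?thesis
      by (intro bexI[of _ 0] exI[of _ UNIV]) auto
  next
    case False
    then obtain n where n: "s n \<in> T"
      using T by blast
    obtain N where N: "\<And>k. N \<le> k \<Longrightarrow> s k < s n / 2"
      using order_tendstoD(2)[OF lim, of "s n / 2"] pos[of n] by (auto simp: eventually_sequentially)
    \<comment> \<open>only the finitely many terms before N can lie above s n / 2\<close>
    define U where "U = {s n / 2<..} - (s ` {..<N} - {s n})"
    have "open U"
      unfolding U_def by (intro open_Diff finite_imp_closed) auto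
    moreover have "U \<inter> T = {s n}"
    proof
      show "U \<inter> T \<subseteq> {s n}"
      proof
        fix y
        assume y: "y \<in> U \<inter> T"
        then have "y \<in> insert 0 (range s)" "y \<noteq> 0"
          using T pos[of n] by (auto simp: U_def)
        then obtain k where "y = s k"
          by blast
        then have "k < N"
          using N[of k] y by (force simp: U_def)
        then show "y \<in> {s n}"
          using y \<open>y = s k\<close> by (auto simp: U_def)
      qed
      show "{s n} \<subseteq> U \<inter> T"
        using n pos[of n] by (auto simp: U_def)
    qed
    ultimately show ?thesis
      using n by blast
  qed
qed

lemma restr_homotopic_if_scattered_cut_set:
  fixes \<alpha> \<beta> :: "real \<Rightarrow> 'a::topological_space"
  assumes wd: "well_defined_scattered_products TYPE('a)"
    and paths: "path \<alpha>" "path \<beta>" and uv: "u \<in> {0..1}" "v \<in> {0..1}"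
    and S: "scattered S" "countable S" "closed S" "S \<subseteq> {0..1}" "0 \<in> S" "1 \<in> S"
    and eq: "\<And>t. t \<in> S \<Longrightarrow> \<alpha> (u + (v - u) * t) = \<beta> (u + (v - u) * t)"
    and gaps: "\<And>p q. p \<in> S \<Longrightarrow> q \<in> S \<Longrightarrow> p < q \<Longrightarrow> {p<..<q} \<inter> S = {} \<Longrightarrow>
                 restr_homotopic \<alpha> \<beta> (u + (v - u) * p) (u + (v - u) * q)"
  shows "restr_homotopic \<alpha> \<beta> u v"
proof -
  have "interior S = {}"
    using open_minus_countable[OF \<open>countable S\<close>, of "interior S"] interior_subset by blast
  then have "homotopy_cut_set 0 1 (restr_path u v \<alpha>) (restr_path u v \<beta>) S"
    using S eq gaps unfolding homotopy_cut_set_def restr_homotopic_def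
    by (auto simp: greaterThanLessThan_in_components_iff closure_closed restr_path_restr_path)
      (auto simp: restr_path_def algebra_simps)
  moreover have "path (restr_path u v \<alpha>)" "path (restr_path u v \<beta>)"
    using paths uv path_restr_path by blast+
  ultimately show ?thesis
    using wd S(1) unfolding well_defined_scattered_products_def restr_homotopic_def by blast
qed

lemma restr_homotopic_from_one_side:
  fixes \<alpha> \<beta> :: "real \<Rightarrow> 'a::topological_space"
  assumes wd: "well_defined_scattered_products TYPE('a)"
    and cut: "homotopy_cut_set 0 1 \<alpha> \<beta> A" and paths: "path \<alpha>" "path \<beta>"
    and aA: "a \<in> A" and mA: "m \<in> A" and "a \<noteq> m"
    and near: "\<And>s t. s \<in> {0<..1} \<Longrightarrow> t \<in> {0<..1} \<Longrightarrow> a + (m - a) * s \<in> A \<Longrightarrow> a + (m - a) * t \<in> A \<Longrightarrow>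
                 restr_homotopic \<alpha> \<beta> (a + (m - a) * s) (a + (m - a) * t)"
  shows "restr_homotopic \<alpha> \<beta> a m"
proof -
  have A01: "A \<subseteq> {0..1}" and "closed A" and eqA: "\<And>x. x \<in> A \<Longrightarrow> \<alpha> x = \<beta> x"
    using cut by (auto simp: homotopy_cut_set_def)
  define \<phi> where "\<phi> t = a + (m - a) * t" for t
  define T where "T = {0..1} \<inter> \<phi> -` A"
  have "closed T"
    unfolding T_def \<phi>_def using \<open>closed A\<close>
    by (intro closed_Int closed_real_atLeastAtMost continuous_closed_vimage) (auto intro!: continuous_intros)
  then have "compact T"
    by (simp add: T_def compact_eq_bounded_closed bounded_Int)
  have T: "0 \<in> T" "1 \<in> T" "T \<subseteq> {0..1}" "\<And>t. t \<in> T \<Longrightarrow> \<phi> t \<in> A"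
    using aA mA by (auto simp: T_def \<phi>_def)
  have in01: "\<phi> t \<in> {0..1}" if "t \<in> T" for t
    using T(4)[OF that] A01 by blast
  consider (isolated) e where "e > 0" "T \<inter> {0<..<e} = {}" | (limit) "0 \<in> closure (T - {0})"
    by (force simp: closure_approachable dist_real_def)
  then show ?thesis
  proof cases
    case isolated
    define e' where "e' = min e 1"
    have "compact (T \<inter> {e'..})" "1 \<in> T \<inter> {e'..}"
      using \<open>compact T\<close> T(2) by (auto simp: e'_def)
    then obtain t0 where t0: "t0 \<in> T \<inter> {e'..}" "\<And>t. t \<in> T \<inter> {e'..} \<Longrightarrow> t0 \<le> t"
      using compact_attains_inf[of "T \<inter> {e'..}"] by blast
    have "0 < t0" "t0 \<le> 1"
      using t0 isolated T(3) by (auto simp: e'_def)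
    have no_gap_point: "T \<inter> {0<..<t0} = {}"
      using isolated t0 by (force simp: e'_def)
    have "open_segment a (\<phi> t0) \<inter> A = {}"
    proof (rule ccontr)
      assume "open_segment a (\<phi> t0) \<inter> A \<noteq> {}"
      then obtain w where "w \<in> open_segment a (\<phi> t0)" "w \<in> A"
        by blast
      then obtain r where w: "w \<in> A" "0 < r" "r < 1" "w = (1 - r) * a + r * \<phi> t0"
        unfolding in_segment by auto
      then have "w = \<phi> (r * t0)"
        by (simp add: \<phi>_def algebra_simps)
      moreover have "r * t0 \<in> {0<..<t0}"
        using w \<open>0 < t0\<close> by (simp add: mult_less_cancel_right1)
      ultimately have "r * t0 \<in> T \<inter> {0<..<t0}"
        using w \<open>t0 \<le> 1\<close> by (simp add: T_def)
      then show False
        using no_gap_point by blast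
    qed
    moreover have "a \<noteq> \<phi> t0"
      using \<open>a \<noteq> m\<close> \<open>0 < t0\<close> by (simp add: \<phi>_def)
    ultimately have "restr_homotopic \<alpha> \<beta> a (\<phi> t0)"
      using restr_homotopic_across_gap[OF cut aA T(4)] t0 by blast
    moreover have "restr_homotopic \<alpha> \<beta> (\<phi> t0) m"
      using near[of t0 1] mA T(4) t0 \<open>0 < t0\<close> \<open>t0 \<le> 1\<close> by (simp add: \<phi>_def)
    moreover have "a \<in> {0..1}" "\<phi> t0 \<in> {0..1}" "m \<in> {0..1}"
      using aA mA A01 in01 t0 by auto
    ultimately show ?thesis
      using restr_homotopic_trans[OF paths] by blast
  next
    case limit
    then obtain s where s: "\<And>n. s n \<in> T - {0}" and "s \<longlonglongrightarrow> 0"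
      unfolding closure_sequential by blast
    have pos: "0 < s n" for n
      using s[of n] T(3) by fastforce
    let ?S = "insert 1 (insert 0 (range s))"
    have "scattered ?S"
      using scattered_insert scattered_insert_limit_range[OF \<open>s \<longlonglongrightarrow> 0\<close> pos] by blast
    moreover have "closed ?S"
      using compact_sequence_with_limit[OF \<open>s \<longlonglongrightarrow> 0\<close>] by (simp add: compact_imp_closed)
    moreover have "?S \<subseteq> T"
      using s T by blast
    moreover have gaps: "restr_homotopic \<alpha> \<beta> (\<phi> p) (\<phi> q)"
      if pq: "p \<in> ?S" "q \<in> ?S" "p < q" and gap: "{p<..<q} \<inter> ?S = {}" for p q
    proof -
      have "p \<in> T" "q \<in> T"
        using pq \<open>?S \<subseteq> T\<close> by blast+
      then have "0 \<le> p" "q \<le> 1"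
        using T(3) by auto
      \<comment> \<open>0 is a limit of ?S, so it is not the left end of a gap\<close>
      obtain n where "s n < q"
        using order_tendstoD(2)[OF \<open>s \<longlonglongrightarrow> 0\<close>, of q] \<open>0 \<le> p\<close> pq(3)
        by (auto simp: eventually_sequentially)
      have "p \<noteq> 0"
      proof
        assume "p = 0"
        then have "s n \<in> {p<..<q} \<inter> ?S"
          using pos[of n] \<open>s n < q\<close> by simp
        then show False
          using gap by blast
      qed
      then have "p \<in> {0<..1}" "q \<in> {0<..1}"
        using \<open>0 \<le> p\<close> \<open>q \<le> 1\<close> pq(3) by auto
      then show ?thesis
        using near[of p q] T(4) \<open>p \<in> T\<close> \<open>q \<in> T\<close> unfolding \<phi>_def by blast
    qed
    moreover have "\<alpha> (\<phi> t) = \<beta> (\<phi> t)" if "t \<in> ?S" for t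
      using that \<open>?S \<subseteq> T\<close> T(4) eqA by blast
    moreover have "a \<in> {0..1}" "m \<in> {0..1}" "?S \<subseteq> {0..1}"
      using aA mA A01 \<open>?S \<subseteq> T\<close> T(3) by auto
    ultimately show ?thesis
      using restr_homotopic_if_scattered_cut_set[OF wd paths, of a m ?S] unfolding \<phi>_def by simp
  qed
qed

lemma related_by_local_steps_and_gaps:
  fixes K :: "real set" and R :: "real \<Rightarrow> real \<Rightarrow> bool"
  assumes "compact K"
    and refl: "\<And>z. z \<in> K \<Longrightarrow> R z z"
    and sym: "\<And>u v. u \<in> K \<Longrightarrow> v \<in> K \<Longrightarrow> R u v \<Longrightarrow> R v u"
    and trans: "\<And>u v w. u \<in> K \<Longrightarrow> v \<in> K \<Longrightarrow> w \<in> K \<Longrightarrow> R u v \<Longrightarrow> R v w \<Longrightarrow> R u w"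
    and local: "\<And>z. z \<in> K \<Longrightarrow> \<exists>e>0. \<forall>w\<in>K. dist w z < e \<longrightarrow> R z w"
    and gap: "\<And>u v. u \<in> K \<Longrightarrow> v \<in> K \<Longrightarrow> u < v \<Longrightarrow> {u<..<v} \<inter> K = {} \<Longrightarrow> R u v"
    and "x \<in> K" "y \<in> K"
  shows "R x y"
proof -
  have "closed K"
    using \<open>compact K\<close> by (rule compact_imp_closed)
  have ordered: "R x y" if x: "x \<in> K" and y: "y \<in> K" and "x \<le> y" for x y
  proof (rule ccontr)
    assume "\<not> R x y"
    \<comment> \<open>the classes of R x are locally constant on K, hence closed\<close>
    have closed_class: "closed {z\<in>K. P (R x z)}" for P
      unfolding closed_def[symmetric] closure_subset_eq[symmetric]
    proof
      fix z
      assume z: "z \<in> closure {z\<in>K. P (R x z)}"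
      then have "z \<in> K"
        using closure_mono[of "{z\<in>K. P (R x z)}" K] closure_closed[OF \<open>closed K\<close>] by blast
      obtain e where "e > 0" and e: "\<And>w. w \<in> K \<Longrightarrow> dist w z < e \<Longrightarrow> R z w"
        using local[OF \<open>z \<in> K\<close>] by blast
      obtain w where "w \<in> K" "P (R x w)" "dist w z < e"
        using z \<open>e > 0\<close> unfolding closure_approachable by blast
      moreover have "R x w \<longleftrightarrow> R x z"
        using e[OF \<open>w \<in> K\<close> \<open>dist w z < e\<close>] sym[OF \<open>z \<in> K\<close> \<open>w \<in> K\<close>]
          trans[OF x \<open>w \<in> K\<close> \<open>z \<in> K\<close>] trans[OF x \<open>z \<in> K\<close> \<open>w \<in> K\<close>]
        by blast
      ultimately show "z \<in> {z\<in>K. P (R x z)}"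
        using \<open>z \<in> K\<close> by simp
    qed
    define N where "N = {z\<in>K. \<not> R x z} \<inter> {x..}"
    have "compact (K \<inter> N)"
      using closed_class[of Not] \<open>compact K\<close> unfolding N_def by (intro compact_Int_closed closed_Int) auto
    moreover have "K \<inter> N = N"
      by (auto simp: N_def)
    ultimately have "compact N" "y \<in> N"
      using y \<open>x \<le> y\<close> \<open>\<not> R x y\<close> by (simp_all add: N_def)
    then obtain q where q: "q \<in> N" "\<And>z. z \<in> N \<Longrightarrow> q \<le> z"
      using compact_attains_inf[of N] by blast
    define M where "M = {z\<in>K. R x z} \<inter> {..q}"
    have "compact (K \<inter> M)"
      using closed_class[of "\<lambda>b. b"] \<open>compact K\<close> unfolding M_def by (intro compact_Int_closed closed_Int) auto
    moreover have "K \<inter> M = M"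
      by (auto simp: M_def)
    ultimately have "compact M" "x \<in> M"
      using x refl[OF x] q(1) by (simp_all add: M_def N_def)
    then obtain p where p: "p \<in> M" "\<And>z. z \<in> M \<Longrightarrow> z \<le> p"
      using compact_attains_sup[of M] by blast
    have pK: "p \<in> K" "R x p" "p \<le> q" and qK: "q \<in> K" "\<not> R x q"
      using p(1) q(1) by (auto simp: M_def N_def)
    then have "p < q"
      by (metis order.not_eq_order_implies_strict)
    moreover have "{p<..<q} \<inter> K = {}"
    proof -
      have "x \<le> p"
        using p(2) \<open>x \<in> M\<close> by blast
      have "w \<notin> K" if "p < w" "w < q" for w
      proof
        assume "w \<in> K"
        show False
        proof (cases "R x w")
          case True
          then have "w \<in> M"
            using \<open>w \<in> K\<close> that by (simp add: M_def)
          then show False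
            using p(2) that by force
        next
          case False
          then have "w \<in> N"
            using \<open>w \<in> K\<close> that \<open>x \<le> p\<close> by (simp add: N_def)
          then show False
            using q(2) that by force
        qed
      qed
      then show ?thesis
        by auto
    qed
    ultimately have "R p q"
      using gap pK(1) qK(1) by blast
    then have "R x q"
      using trans[OF x pK(1) qK(1)] pK(2) by blast
    then show False
      using qK(2) by blast
  qed
  show ?thesis
  proof (cases "x \<le> y")
    case True
    then show ?thesis
      using ordered[OF \<open>x \<in> K\<close> \<open>y \<in> K\<close>] by blast
  next
    case False
    then show ?thesis
      using ordered[OF \<open>y \<in> K\<close> \<open>x \<in> K\<close>] sym[OF \<open>y \<in> K\<close> \<open>x \<in> K\<close>] by simp
  qed
qed

definition locally_restr_homotopic :: "(real \<Rightarrow> 'a::topological_space) \<Rightarrow> (real \<Rightarrow> 'a) \<Rightarrow> real set \<Rightarrow> real \<Rightarrow> bool"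
  where "locally_restr_homotopic \<alpha> \<beta> A x \<longleftrightarrow> (\<exists>e>0. \<forall>c\<in>A. dist c x < e \<longrightarrow> restr_homotopic \<alpha> \<beta> x c)"

lemma closed_not_locally_restr_homotopic:
  assumes "closed A" "A \<subseteq> {0..1}" and paths: "path \<alpha>" "path \<beta>"
  shows "closed {x\<in>A. \<not> locally_restr_homotopic \<alpha> \<beta> A x}"
  unfolding closure_subset_eq[symmetric]
proof
  fix z
  assume z: "z \<in> closure {x\<in>A. \<not> locally_restr_homotopic \<alpha> \<beta> A x}"
  moreover have "closure {x\<in>A. \<not> locally_restr_homotopic \<alpha> \<beta> A x} \<subseteq> A"
    using \<open>closed A\<close> by (intro closure_minimal) auto
  ultimately have "z \<in> A"
    by blast
  have "\<not> locally_restr_homotopic \<alpha> \<beta> A z"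
  proof
    assume "locally_restr_homotopic \<alpha> \<beta> A z"
    then obtain e where "e > 0" and e: "\<And>c. c \<in> A \<Longrightarrow> dist c z < e \<Longrightarrow> restr_homotopic \<alpha> \<beta> z c"
      unfolding locally_restr_homotopic_def by blast
    obtain w where w: "w \<in> A" "\<not> locally_restr_homotopic \<alpha> \<beta> A w" "dist w z < e / 2"
      using z \<open>e > 0\<close> unfolding closure_approachable by (metis (no_types, lifting) half_gt_zero mem_Collect_eq)
    have "restr_homotopic \<alpha> \<beta> w c" if "c \<in> A" "dist c w < e / 2" for c
    proof -
      have "dist c z < e"
        using that(2) w(3) dist_triangle[of c z w] by simp
      then have "restr_homotopic \<alpha> \<beta> z w" "restr_homotopic \<alpha> \<beta> z c"
        using e[OF w(1)] e[OF that(1)] w(3) \<open>e > 0\<close> by simp_all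
      then have "restr_homotopic \<alpha> \<beta> w z" "restr_homotopic \<alpha> \<beta> z c"
        using restr_homotopic_sym by blast+
      moreover have "w \<in> {0..1}" "z \<in> {0..1}" "c \<in> {0..1}"
        using w(1) \<open>z \<in> A\<close> that(1) assms(2) by auto
      ultimately show ?thesis
        using restr_homotopic_trans[OF paths] by blast
    qed
    then have "locally_restr_homotopic \<alpha> \<beta> A w"
      unfolding locally_restr_homotopic_def using \<open>e > 0\<close> half_gt_zero by blast
    then show False
      using w(2) by blast
  qed
  then show "z \<in> {x\<in>A. \<not> locally_restr_homotopic \<alpha> \<beta> A x}"
    using \<open>z \<in> A\<close> by blast
qed

lemma restr_homotopic_if_locally_inside:
  fixes \<alpha> \<beta> :: "real \<Rightarrow> 'a::topological_space"
  assumes wd: "well_defined_scattered_products TYPE('a)"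
    and cut: "homotopy_cut_set 0 1 \<alpha> \<beta> A" and paths: "path \<alpha>" "path \<beta>"
    and "a < b" "a \<in> A" "b \<in> A"
    and inside: "\<And>x. x \<in> A \<Longrightarrow> a < x \<Longrightarrow> x < b \<Longrightarrow> locally_restr_homotopic \<alpha> \<beta> A x"
  shows "restr_homotopic \<alpha> \<beta> a b"
proof (cases "{a<..<b} \<inter> A = {}")
  case True
  then show ?thesis
    using restr_homotopic_across_gap[OF cut] assms(5-7) by (simp add: open_segment_eq_real_ivl)
next
  case False
  then obtain m where "m \<in> A" "a < m" "m < b"
    by auto
  have A01: "A \<subseteq> {0..1}" and "closed A" and eqA: "\<And>x. x \<in> A \<Longrightarrow> \<alpha> x = \<beta> x"
    using cut by (auto simp: homotopy_cut_set_def)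
  have between: "restr_homotopic \<alpha> \<beta> x y"
    if x: "x \<in> A" "a < x" "x < b" and y: "y \<in> A" "a < y" "y < b" for x y
  proof (rule related_by_local_steps_and_gaps[where K = "A \<inter> {min x y..max x y}"])
    show "compact (A \<inter> {min x y..max x y})"
      using \<open>closed A\<close> by (simp add: closed_Int_compact)
    show "x \<in> A \<inter> {min x y..max x y}" "y \<in> A \<inter> {min x y..max x y}"
      using x y by auto
    show "restr_homotopic \<alpha> \<beta> z z" if "z \<in> A \<inter> {min x y..max x y}" for z
      using that A01 eqA restr_homotopic_refl[OF paths(1)] by blast
    show "restr_homotopic \<alpha> \<beta> v u" if "restr_homotopic \<alpha> \<beta> u v" for u v
      using that by (rule restr_homotopic_sym)
    show "restr_homotopic \<alpha> \<beta> u w"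
      if "u \<in> A \<inter> {min x y..max x y}" "v \<in> A \<inter> {min x y..max x y}" "w \<in> A \<inter> {min x y..max x y}"
        "restr_homotopic \<alpha> \<beta> u v" "restr_homotopic \<alpha> \<beta> v w" for u v w
      using that A01 restr_homotopic_trans[OF paths, of u v w] by blast
    show "\<exists>e>0. \<forall>w\<in>A \<inter> {min x y..max x y}. dist w z < e \<longrightarrow> restr_homotopic \<alpha> \<beta> z w"
      if "z \<in> A \<inter> {min x y..max x y}" for z
    proof -
      have "locally_restr_homotopic \<alpha> \<beta> A z"
        using that x y by (intro inside) auto
      then show ?thesis
        unfolding locally_restr_homotopic_def by blast
    qed
    show "restr_homotopic \<alpha> \<beta> u v"
      if "u \<in> A \<inter> {min x y..max x y}" "v \<in> A \<inter> {min x y..max x y}" "u < v"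
        "{u<..<v} \<inter> (A \<inter> {min x y..max x y}) = {}" for u v
    proof -
      have "open_segment u v \<inter> A = {}"
        using that by (auto simp: open_segment_eq_real_ivl)
      then show ?thesis
        using restr_homotopic_across_gap[OF cut] that by auto
    qed
  qed
  have "restr_homotopic \<alpha> \<beta> e m" if "e \<in> {a, b}" for e
  proof (rule restr_homotopic_from_one_side[OF wd cut paths])
    show "e \<in> A" "m \<in> A" "e \<noteq> m"
      using that assms \<open>m \<in> A\<close> \<open>a < m\<close> \<open>m < b\<close> by auto
    have "a < e + (m - e) * s \<and> e + (m - e) * s < b" if "s \<in> {0<..1}" for s
    proof -
      have "e + (m - e) * s = (1 - s) * e + s * m"
        by (simp add: algebra_simps)
      then have "e + (m - e) * s \<in> closed_segment e m"
        unfolding in_segment(1) real_scaleR_def using that by (intro exI[of _ s]) auto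
      moreover have "e + (m - e) * s \<noteq> e"
        using \<open>e \<noteq> m\<close> that by simp
      ultimately show ?thesis
        using \<open>e \<in> {a, b}\<close> \<open>a < m\<close> \<open>m < b\<close> by (auto simp: closed_segment_eq_real_ivl less_le)
    qed
    then show "restr_homotopic \<alpha> \<beta> (e + (m - e) * s) (e + (m - e) * t)"
      if "s \<in> {0<..1}" "t \<in> {0<..1}" "e + (m - e) * s \<in> A" "e + (m - e) * t \<in> A" for s t
      using that between by blast
  qed
  then have "restr_homotopic \<alpha> \<beta> a m" "restr_homotopic \<alpha> \<beta> m b"
    using restr_homotopic_sym by blast+
  moreover have "a \<in> {0..1}" "m \<in> {0..1}" "b \<in> {0..1}"
    using A01 assms \<open>m \<in> A\<close> by auto
  ultimately show ?thesis
    using restr_homotopic_trans[OF paths] by blast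
qed

lemma restr_homotopic_if_loop_null_homotopic:
  assumes paths: "path \<alpha>" "path \<beta>" and "x \<in> {0..1}" "c \<in> {0..1}"
    and ends: "\<alpha> x = \<beta> x" "\<alpha> c = \<beta> c"
    and null: "homotopic_paths UNIV (restr_path x c \<alpha> +++ restr_path c x \<beta>) (\<lambda>t. \<alpha> x)"
  shows "restr_homotopic \<alpha> \<beta> x c"
proof -
  let ?a = "restr_path x c \<alpha>" and ?b = "restr_path x c \<beta>" and ?b' = "restr_path c x \<beta>"
  \<comment> \<open>X is only a topological space: degenerate restrictions serve as the constant paths\<close>
  have const: "restr_path x x \<beta> = (\<lambda>t. \<alpha> x)" "restr_path c c \<beta> = restr_path c c \<alpha>"
    using ends by (simp_all add: restr_path_def)
  have pieces: "path ?a" "path ?b" "path ?b'"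
    using path_restr_path paths assms(3,4) by blast+
  have "homotopic_paths UNIV ?b ((\<lambda>t. \<alpha> x) +++ ?b)"
    using homotopic_paths_join_restr_path[OF paths(2) assms(3) assms(3) assms(4)] const(1)
    by (simp add: homotopic_paths_sym)
  also have "homotopic_paths UNIV \<dots> ((?a +++ ?b') +++ ?b)"
    using homotopic_paths_join[OF homotopic_paths_sym[OF null], of ?b ?b] pieces ends
    by (simp add: pathfinish_def)
  also have "homotopic_paths UNIV \<dots> (?a +++ (?b' +++ ?b))"
    using homotopic_paths_assoc[of ?a UNIV ?b' ?b] pieces ends by (simp add: homotopic_paths_sym)
  also have "homotopic_paths UNIV \<dots> (?a +++ restr_path c c \<alpha>)"
    using homotopic_paths_join[of UNIV ?a ?a] homotopic_paths_join_restr_path[OF paths(2) assms(4,3,4)]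
      pieces const(2) ends by simp
  also have "homotopic_paths UNIV \<dots> ?a"
    using homotopic_paths_join_restr_path[OF paths(1) assms(3,4,4)] .
  finally show ?thesis
    unfolding restr_homotopic_def by (rule homotopic_paths_sym)
qed

lemma not_locally_restr_homotopic_imp_aw:
  fixes \<alpha> \<beta> :: "real \<Rightarrow> 'a::topological_space"
  assumes paths: "path \<alpha>" "path \<beta>" and A01: "A \<subseteq> {0..1}" and eqA: "\<And>x. x \<in> A \<Longrightarrow> \<alpha> x = \<beta> x"
    and "x \<in> A" and bad: "\<not> locally_restr_homotopic \<alpha> \<beta> A x"
  shows "\<alpha> x \<in> aw"
proof -
  have "x \<in> closure {c\<in>A. \<not> restr_homotopic \<alpha> \<beta> x c}"
    using bad unfolding closure_approachable locally_restr_homotopic_def by blast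
  then obtain c where c: "\<And>n. c n \<in> A" "\<And>n. \<not> restr_homotopic \<alpha> \<beta> x (c n)" and "c \<longlonglongrightarrow> x"
    unfolding closure_sequential by blast
  have x01: "x \<in> {0..1}" and c01: "\<And>n. c n \<in> {0..1}"
    using A01 \<open>x \<in> A\<close> c(1) by blast+
  have ends: "\<alpha> x = \<beta> x" "\<And>n. \<alpha> (c n) = \<beta> (c n)"
    using eqA \<open>x \<in> A\<close> c(1) by auto
  define gs where "gs n = restr_path x (c n) \<alpha> +++ restr_path (c n) x \<beta>" for n
  have pieces: "path (restr_path x (c n) \<alpha>)" "path (restr_path (c n) x \<beta>)" for n
    using path_restr_path paths x01 c01 by blast+
  have loop: "is_loop_at (gs n) (\<alpha> x)" for n
    using pieces[of n] ends by (simp add: is_loop_at_def gs_def)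
  have nontrivial: "\<not> trivial_loop (gs n)" for n
  proof
    assume "trivial_loop (gs n)"
    then obtain k where H: "homotopic_paths UNIV (gs n) (\<lambda>t. k)"
      unfolding trivial_loop_def by blast
    have "pathstart (gs n) = \<alpha> x"
      by (simp add: gs_def)
    moreover have "pathstart (\<lambda>t::real. k) = k"
      by (simp add: pathstart_def)
    ultimately have "k = \<alpha> x"
      using homotopic_paths_imp_pathstart[OF H] by simp
    then have "restr_homotopic \<alpha> \<beta> x (c n)"
      using restr_homotopic_if_loop_null_homotopic[OF paths x01 c01 ends(1) ends(2)] H
      unfolding gs_def by blast
    then show False
      using c(2) by blast
  qed
  have "\<forall>\<^sub>F n in sequentially. path_image (gs n) \<subseteq> U" if U: "open U" "\<alpha> x \<in> U" for U
  proof -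
    obtain O1 where "open O1" "x \<in> O1" and O1: "\<And>y. y \<in> {0..1} \<Longrightarrow> y \<in> O1 \<Longrightarrow> \<alpha> y \<in> U"
      using paths(1) x01 U unfolding path_def continuous_on_topological by metis
    obtain O2 where "open O2" "x \<in> O2" and O2: "\<And>y. y \<in> {0..1} \<Longrightarrow> y \<in> O2 \<Longrightarrow> \<beta> y \<in> U"
      using paths(2) x01 U ends(1) unfolding path_def continuous_on_topological by metis
    obtain r where "r > 0" "ball x r \<subseteq> O1 \<inter> O2"
      using open_contains_ball[of "O1 \<inter> O2"] \<open>open O1\<close> \<open>open O2\<close> \<open>x \<in> O1\<close> \<open>x \<in> O2\<close> by blast
    have image_small: "path_image (gs n) \<subseteq> U" if "dist (c n) x < r" for n
    proof -
      have "c n \<in> ball x r \<inter> {0..1}" "x \<in> ball x r \<inter> {0..1}"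
        using that \<open>r > 0\<close> c01 x01 by (auto simp: dist_commute)
      moreover have "convex (ball x r \<inter> {0..1})"
        by (simp add: convex_Int)
      ultimately have "closed_segment x (c n) \<subseteq> ball x r \<inter> {0..1}"
        by (intro closed_segment_subset)
      then have "\<alpha> ` closed_segment x (c n) \<subseteq> U" "\<beta> ` closed_segment x (c n) \<subseteq> U"
        using O1 O2 \<open>ball x r \<subseteq> O1 \<inter> O2\<close> by (auto simp: subset_iff)
      then show ?thesis
        using ends(2) by (simp add: gs_def path_image_join path_image_restr_path closed_segment_commute)
    qed
    have "\<forall>\<^sub>F n in sequentially. dist (c n) x < r"
      using \<open>c \<longlonglongrightarrow> x\<close> \<open>r > 0\<close> by (rule tendstoD)
    then show ?thesis
      by (rule eventually_mono) (rule image_small)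
  qed
  then have "null_sequence gs (\<alpha> x)"
    unfolding null_sequence_def using loop by blast
  then show ?thesis
    unfolding aw_def using nontrivial by blast
qed

theorem mainTheorem14:
  fixes \<alpha> \<beta> :: "real \<Rightarrow> 'a::topological_space" and A :: "real set"
  assumes "well_defined_scattered_products TYPE('a)"
    and "path \<alpha>" and "path \<beta>"
    and "homotopy_cut_set 0 1 \<alpha> \<beta> A"
  shows "\<exists>B\<subseteq>A. homotopy_cut_set 0 1 \<alpha> \<beta> B \<and>
           \<alpha> ` (B \<inter> {0<..<1}) = \<beta> ` (B \<inter> {0<..<1}) \<and>
           \<alpha> ` (B \<inter> {0<..<1}) \<subseteq> aw"
proof -
  note wd = assms(1) and paths = assms(2,3) and cut = assms(4)
  have A01: "A \<subseteq> {0..1}" and "closed A" and "interior (closure A) = {}" and "0 \<in> A" "1 \<in> A"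
    and eqA: "\<And>x. x \<in> A \<Longrightarrow> \<alpha> x = \<beta> x"
    using cut by (auto simp: homotopy_cut_set_def)
  define B where "B = {0, 1} \<union> {x\<in>A. \<not> locally_restr_homotopic \<alpha> \<beta> A x}"
  have "B \<subseteq> A"
    using \<open>0 \<in> A\<close> \<open>1 \<in> A\<close> by (auto simp: B_def)
  have "homotopy_cut_set 0 1 \<alpha> \<beta> B"
    unfolding homotopy_cut_set_def
  proof (intro conjI allI impI ballI)
    show "B \<subseteq> {0..1}"
      using \<open>B \<subseteq> A\<close> A01 by blast
    show "0 \<in> B" "1 \<in> B"
      by (simp_all add: B_def)
    show "\<alpha> x = \<beta> x" if "x \<in> B" for x
      using that \<open>B \<subseteq> A\<close> eqA by blast
    show "closed B"
      unfolding B_def using closed_not_locally_restr_homotopic[OF \<open>closed A\<close> A01 paths] by (intro closed_Un) auto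
    show "interior (closure B) = {}"
      using \<open>interior (closure A) = {}\<close> interior_mono[OF closure_mono[OF \<open>B \<subseteq> A\<close>]] by blast
    fix a b
    assume gap: "a < b \<and> {a<..<b} \<in> components ({0..1} - B)"
    then have "a < b" "a \<in> B" "b \<in> B" "{a<..<b} \<inter> B = {}"
      using greaterThanLessThan_in_components_iff[of a b 0 1 B] by auto
    moreover have "locally_restr_homotopic \<alpha> \<beta> A x" if "x \<in> A" "a < x" "x < b" for x
      using \<open>{a<..<b} \<inter> B = {}\<close> that by (auto simp: B_def)
    ultimately have "restr_homotopic \<alpha> \<beta> a b"
      using restr_homotopic_if_locally_inside[OF wd cut paths] \<open>B \<subseteq> A\<close> by blast
    then show "homotopic_paths UNIV (restr_path a b \<alpha>) (restr_path a b \<beta>)"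
      unfolding restr_homotopic_def .
  qed
  moreover have "\<alpha> ` (B \<inter> {0<..<1}) = \<beta> ` (B \<inter> {0<..<1})"
    using \<open>B \<subseteq> A\<close> eqA by (intro image_cong) auto
  moreover have "\<alpha> ` (B \<inter> {0<..<1}) \<subseteq> aw"
    using not_locally_restr_homotopic_imp_aw[OF paths A01 eqA] by (force simp: B_def)
  ultimately show ?thesis
    using \<open>B \<subseteq> A\<close> by blast
qed

end
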